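(* For every integer $p\ge 2$, the path $P_p$ on $p$ vertices satisfies $\gamma_{[3R]}(P_p)=M_p$, where $M_p=4\lfloor p/3\rfloor$ if $p\equiv 0\pmod 3$, $M_p=4\lfloor p/3\rfloor+3$ if $p\equiv 1\pmod 3$, and $M_p=4\lfloor p/3\rfloor+4$ if $p\equiv 2\pmod 3$.
   Context: For a graph $\Gamma=(V,E)$ and $h:V\to\{0,1,2,3,4\}$, let $AN(v)=\{w\in N(v):h(w)\ge 1\}$, $AN[v]=AN(v)\cup\{v\}$ and $h(S)=\sum_{u\in S}h(u)$. $h$ is a triple Roman dominating function (3RDF) if every $v$ with $h(v)<3$ satisfies $h(AN[v])\ge|AN(v)|+3$. The triple Roman domination number $\gamma_{[3R]}(\Gamma)$ is the minimum weight $h(V)$ of a 3RDF of $\Gamma$. *)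

theory Defs
  imports Main
begin

text \<open>Functions h : V -> {0,...,4} are represented as
  h :: 'a => nat with h v <= 4 on V (values outside V are irrelevant).\<close>

definition active_nbhd :: "'a set \<Rightarrow> ('a \<Rightarrow> 'a \<Rightarrow> bool) \<Rightarrow> ('a \<Rightarrow> nat) \<Rightarrow> 'a \<Rightarrow> 'a set" where
  "active_nbhd V E h v = {w \<in> V. E v w \<and> h w \<ge> 1}"

definition is_3RDF :: "'a set \<Rightarrow> ('a \<Rightarrow> 'a \<Rightarrow> bool) \<Rightarrow> ('a \<Rightarrow> nat) \<Rightarrow> bool" where
  "is_3RDF V E h \<longleftrightarrow>
     (\<forall>v\<in>V. h v \<le> 4) \<and>
     (\<forall>v\<in>V. h v < 3 \<longrightarrow>
        sum h (insert v (active_nbhd V E h v)) \<ge> card (active_nbhd V E h v) + 3)"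

definition gamma_3R :: "'a set \<Rightarrow> ('a \<Rightarrow> 'a \<Rightarrow> bool) \<Rightarrow> nat" where
  "gamma_3R V E = Min {sum h V | h. is_3RDF V E h}"

definition path_vertices :: "nat \<Rightarrow> nat set" where
  "path_vertices p = {0..<p}"

definition path_adj :: "nat \<Rightarrow> nat \<Rightarrow> bool" where
  "path_adj i j \<longleftrightarrow> i + 1 = j \<or> j + 1 = i"

end

theory Submission
  imports Defs
begin

text \<open>The bound is attained by putting 4 on every vertex \<open>v \<equiv> 1 (mod 3)\<close>, together with 3 on the
  last vertex when \<open>p \<equiv> 1 (mod 3)\<close>. For the lower bound note that on a path the 3RDF condition
  at a vertex only involves the values at three consecutive vertices, so a 3RDF can be read from
  left to right like a word accepted by a finite automaton. A potential \<open>\<psi>\<close>, depending on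
  \<open>n mod 3\<close> and on the last two values of the prefix of length \<open>n\<close>, satisfies
  \<open>weight of the prefix \<ge> 4 \<lfloor>n/3\<rfloor> + \<psi>\<close>; this invariant is preserved by every admissible
  extension of the prefix, and at the right end of the path it yields \<open>M\<^sub>p\<close>. Both facts are
  finite case checks.\<close>

text \<open>Here \<open>a\<close> and \<open>c\<close> are the values on the two path neighbours of a vertex of value \<open>b\<close>;
  a missing neighbour of an end vertex counts as a neighbour of value 0.\<close>

definition path_3RD_condition :: "nat \<Rightarrow> nat \<Rightarrow> nat \<Rightarrow> bool" where
  "path_3RD_condition a b c \<longleftrightarrow>
     (b < 3 \<longrightarrow> of_bool (1 \<le> a) + of_bool (1 \<le> c) + 3 \<le> a + b + c)"

lemma path_3RD_condition_if_large: "4 \<le> a \<or> 3 \<le> b \<or> 4 \<le> c \<Longrightarrow> path_3RD_condition a b c"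
  unfolding path_3RD_condition_def by auto

lemma path_local_condition_iff:
  fixes h :: "nat \<Rightarrow> nat"
  assumes "v < p"
  defines "N \<equiv> active_nbhd (path_vertices p) path_adj h v"
  shows "(h v < 3 \<longrightarrow> card N + 3 \<le> sum h (insert v N)) \<longleftrightarrow>
    path_3RD_condition (if v = 0 then 0 else h (v - 1)) (h v) (if Suc v < p then h (Suc v) else 0)"
proof -
  define L where "L = {w. Suc w = v \<and> 1 \<le> h w}"
  define R where "R = {w. w = Suc v \<and> w < p \<and> 1 \<le> h w}"
  have N: "N = L \<union> R"
    using \<open>v < p\<close> unfolding N_def L_def R_def active_nbhd_def path_adj_def path_vertices_def by auto
  have L: "L = (if v = 0 then {} else if 1 \<le> h (v - 1) then {v - 1} else {})"
    unfolding L_def by (cases v) auto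
  have R: "R = (if Suc v < p \<and> 1 \<le> h (Suc v) then {Suc v} else {})"
    unfolding R_def by auto
  have "finite L" "finite R" "L \<inter> R = {}" "v \<notin> L \<union> R"
    unfolding L R by auto
  then have "sum h (insert v N) = h v + sum h L + sum h R" "card N = card L + card R"
    unfolding N by (simp_all add: sum.union_disjoint card_Un_disjoint)
  moreover have "sum h L = (if v = 0 then 0 else h (v - 1))"
      "card L = of_bool (1 \<le> (if v = 0 then 0 else h (v - 1)))"
    unfolding L by auto
  moreover have "sum h R = (if Suc v < p then h (Suc v) else 0)"
      "card R = of_bool (1 \<le> (if Suc v < p then h (Suc v) else 0))"
    unfolding R by auto
  ultimately show ?thesis
    unfolding path_3RD_condition_def by linarith
qed

lemma is_3RDF_path_iff:
  "is_3RDF (path_vertices p) path_adj h \<longleftrightarrow>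
    (\<forall>v<p. h v \<le> 4 \<and>
      path_3RD_condition (if v = 0 then 0 else h (v - 1)) (h v) (if Suc v < p then h (Suc v) else 0))"
  using path_local_condition_iff[of _ p h] unfolding is_3RDF_def path_vertices_def by auto

lemma gamma_3R_eqI:
  assumes "is_3RDF V E h" and "\<And>g. is_3RDF V E g \<Longrightarrow> sum h V \<le> sum g V"
  shows "gamma_3R V E = sum h V"
proof -
  let ?W = "{sum g V | g. is_3RDF V E g}"
  have "?W \<subseteq> {..card V * 4}"
    using sum_bounded_above[of V _ 4] unfolding is_3RDF_def by fastforce
  then have "finite ?W"
    using finite_subset by blast
  then show ?thesis
    unfolding gamma_3R_def using assms by (intro Min_eqI) auto
qed

definition path_3R_value :: "nat \<Rightarrow> nat" where
  "path_3R_value p =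
     (if p mod 3 = 0 then 4 * (p div 3)
      else if p mod 3 = 1 then 4 * (p div 3) + 3
      else 4 * (p div 3) + 4)"

definition path_witness :: "nat \<Rightarrow> nat \<Rightarrow> nat" where
  "path_witness p v = (if v mod 3 = 1 then 4 else 0) + (if Suc v = p \<and> p mod 3 = 1 then 3 else 0)"

lemma path_witness_le_4: "path_witness p v \<le> 4"
proof -
  have "Suc v mod 3 \<noteq> 1" if "v mod 3 = 1"
    using that by (simp add: mod_Suc)
  then show ?thesis
    unfolding path_witness_def by auto
qed

lemma path_witness_is_3RDF: "is_3RDF (path_vertices p) path_adj (path_witness p)"
  unfolding is_3RDF_path_iff
proof (intro allI impI conjI)
  fix v assume "v < p"
  show "path_witness p v \<le> 4"
    by (rule path_witness_le_4)
  consider "v mod 3 = 1" | "v mod 3 = 0" "Suc v < p" | "v mod 3 = 0" "Suc v = p" | "v mod 3 = 2"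
    using \<open>v < p\<close> mod_less_divisor[of 3 v]
    by (metis Suc_lessI less_Suc_eq numeral_3_eq_3 numeral_2_eq_2 One_nat_def less_one)
  then show "path_3RD_condition (if v = 0 then 0 else path_witness p (v - 1)) (path_witness p v)
      (if Suc v < p then path_witness p (Suc v) else 0)"
  proof cases
    case 1
    then show ?thesis
      by (intro path_3RD_condition_if_large) (simp add: path_witness_def)
  next
    case 2
    then have "Suc v mod 3 = 1"
      by (simp add: mod_Suc)
    then show ?thesis
      using 2 by (intro path_3RD_condition_if_large) (simp add: path_witness_def)
  next
    case 3
    then have "p mod 3 = 1"
      by (auto simp: mod_Suc)
    then show ?thesis
      using 3 by (intro path_3RD_condition_if_large) (simp add: path_witness_def)
  next
    case 4
    then obtain u where "v = Suc u" "u mod 3 = 1"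
      by (cases v) (auto simp: mod_Suc split: if_splits)
    then show ?thesis
      by (intro path_3RD_condition_if_large) (simp add: path_witness_def)
  qed
qed

lemma sum_upto_fours: "(\<Sum>v<n. if v mod 3 = 1 then 4 else 0 :: nat) = 4 * (Suc n div 3)"
proof (induction n)
  case (Suc n)
  have "Suc (Suc n) div 3 = Suc n div 3 + (if n mod 3 = 1 then 1 else 0)"
    by (simp add: div_Suc mod_Suc)
  then show ?case
    using Suc by simp
qed simp

lemma sum_path_witness: "sum (path_witness p) (path_vertices p) = path_3R_value p"
proof -
  have "sum (path_witness p) (path_vertices p) =
      4 * (Suc p div 3) + (\<Sum>v<p. if Suc v = p \<and> p mod 3 = 1 then 3 else 0)"
    unfolding path_witness_def path_vertices_def atLeast0LessThan sum.distrib sum_upto_fours ..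
  also have "(\<Sum>v<p. if Suc v = p \<and> p mod 3 = 1 then 3 else 0) = (if p mod 3 = 1 then 3 else 0 :: nat)"
    by (cases p) (simp_all add: sum.delta)
  finally have "sum (path_witness p) (path_vertices p) = 4 * (Suc p div 3) + (if p mod 3 = 1 then 3 else 0)" .
  moreover have "p mod 3 = 0 \<or> p mod 3 = 1 \<or> p mod 3 = 2"
    by auto
  ultimately show ?thesis
    unfolding path_3R_value_def by (elim disjE) (simp_all add: div_Suc mod_Suc)
qed

text \<open>\<open>path_potential r a b\<close> is the least value of \<open>h 0 + \<dots> + h (n - 1) - 4 * (n div 3)\<close>
  over all \<open>n \<ge> 2\<close> with \<open>n mod 3 = r\<close> and all \<open>h\<close> with values in \<open>{0..4}\<close>, \<open>h (n - 2) = a\<close>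
  and \<open>h (n - 1) = b\<close> that satisfy the 3RDF condition at the vertices \<open>0, \<dots>, n - 2\<close>; the table
  was found by dynamic programming. Only the three inequalities proved below are used.\<close>

definition path_potential :: "nat \<Rightarrow> nat \<Rightarrow> nat \<Rightarrow> nat" where
  "path_potential r a b =
     [[[0, 1, 1, 2, 3], [0, 1, 2, 3, 4], [0, 1, 2, 3, 4], [0, 1, 2, 3, 4], [0, 1, 2, 3, 4]],
      [[0, 1, 2, 3, 4], [1, 2, 3, 4, 5], [2, 3, 3, 4, 5], [2, 3, 4, 5, 6], [3, 4, 5, 6, 7]],
      [[3, 4, 4, 5, 4], [3, 4, 5, 4, 5], [3, 4, 4, 5, 6], [3, 4, 5, 6, 7], [4, 5, 6, 7, 8]]] ! r ! a ! b"

lemma nat_less_3_cases: "(r::nat) < 3 \<Longrightarrow> r = 0 \<or> r = 1 \<or> r = 2"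
  by auto

lemma nat_le_4_cases: "(a::nat) \<le> 4 \<Longrightarrow> a = 0 \<or> a = 1 \<or> a = 2 \<or> a = 3 \<or> a = 4"
  by auto

lemma path_potential_start:
  assumes "a \<le> 4" "b \<le> 4" "path_3RD_condition 0 a b"
  shows "path_potential 2 a b \<le> a + b"
  using assms(3) nat_le_4_cases[OF assms(1)] nat_le_4_cases[OF assms(2)]
  unfolding path_3RD_condition_def path_potential_def
  by (elim disjE; simp)

lemma path_potential_step_mod3:
  assumes "r < 3" "a \<le> 4" "b \<le> 4" "c \<le> 4" "path_3RD_condition a b c"
  shows "path_potential (Suc r mod 3) b c + 4 * of_bool (r = 2) \<le> path_potential r a b + c"
  using assms(5) nat_less_3_cases[OF assms(1)]
    nat_le_4_cases[OF assms(2)] nat_le_4_cases[OF assms(3)] nat_le_4_cases[OF assms(4)]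
  unfolding path_3RD_condition_def path_potential_def
  by (elim disjE; simp)

lemma path_potential_step:
  assumes "a \<le> 4" "b \<le> 4" "c \<le> 4" "path_3RD_condition a b c"
  shows "4 * (Suc n div 3) + path_potential (Suc n mod 3) b c \<le>
    4 * (n div 3) + path_potential (n mod 3) a b + c"
proof -
  have "Suc n mod 3 = Suc (n mod 3) mod 3" "Suc n div 3 = n div 3 + of_bool (n mod 3 = 2)"
    by (simp_all add: mod_Suc div_Suc)
  then show ?thesis
    using path_potential_step_mod3[of "n mod 3", OF _ assms] by simp
qed

lemma path_3R_value_le_potential:
  assumes "a \<le> 4" "b \<le> 4" "path_3RD_condition a b 0"
  shows "path_3R_value n \<le> 4 * (n div 3) + path_potential (n mod 3) a b"
proof -
  have "n mod 3 = 0 \<or> n mod 3 = 1 \<or> n mod 3 = 2"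
    by (rule nat_less_3_cases) simp
  then show ?thesis
    using assms(3) nat_le_4_cases[OF assms(1)] nat_le_4_cases[OF assms(2)]
    unfolding path_3RD_condition_def path_potential_def path_3R_value_def
    by (elim disjE; simp)
qed

lemma prefix_weight_ge_potential:
  assumes "\<forall>v \<le> Suc m. h v \<le> 4"
    and "\<forall>v \<le> m. path_3RD_condition (if v = 0 then 0 else h (v - 1)) (h v) (h (Suc v))"
  shows "4 * (Suc (Suc m) div 3) + path_potential (Suc (Suc m) mod 3) (h m) (h (Suc m))
    \<le> sum h {..Suc m}"
  using assms
proof (induction m)
  case 0
  then show ?case
    using path_potential_start[of "h 0" "h 1"] by (simp add: numeral_2_eq_2)
next
  case (Suc m)
  have "4 * (Suc (Suc (Suc m)) div 3) + path_potential (Suc (Suc (Suc m)) mod 3) (h (Suc m)) (h (Suc (Suc m)))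
      \<le> 4 * (Suc (Suc m) div 3) + path_potential (Suc (Suc m) mod 3) (h m) (h (Suc m)) + h (Suc (Suc m))"
    using Suc.prems by (intro path_potential_step) auto
  also have "\<dots> \<le> sum h {..Suc m} + h (Suc (Suc m))"
    using Suc by simp
  finally show ?case
    by simp
qed

lemma path_3R_value_le_weight:
  assumes "2 \<le> p" "is_3RDF (path_vertices p) path_adj h"
  shows "path_3R_value p \<le> sum h (path_vertices p)"
proof -
  obtain m where p: "p = Suc (Suc m)"
    using assms(1) by (metis add_2_eq_Suc le_Suc_ex)
  have le4: "h v \<le> 4"
    and cond: "path_3RD_condition (if v = 0 then 0 else h (v - 1)) (h v) (if v \<le> m then h (Suc v) else 0)"
    if "v \<le> Suc m" for v
    using assms(2) that unfolding is_3RDF_path_iff p less_Suc_eq_le Suc_le_mono by blast+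
  have "path_3R_value p \<le> 4 * (p div 3) + path_potential (p mod 3) (h m) (h (Suc m))"
    using le4 cond[of "Suc m"] by (intro path_3R_value_le_potential) auto
  also have "\<dots> \<le> sum h {..Suc m}"
    unfolding p
  proof (rule prefix_weight_ge_potential)
    show "\<forall>v \<le> m. path_3RD_condition (if v = 0 then 0 else h (v - 1)) (h v) (h (Suc v))"
      using cond by (metis le_SucI)
  qed (simp add: le4)
  finally show ?thesis
    unfolding p path_vertices_def atLeast0LessThan lessThan_Suc_atMost .
qed

theorem proposition20:
  fixes p :: nat
  assumes "p \<ge> 2"
  shows "gamma_3R (path_vertices p) path_adj =
           (if p mod 3 = 0 then 4 * (p div 3)
            else if p mod 3 = 1 then 4 * (p div 3) + 3
            else 4 * (p div 3) + 4)"
proof -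
  have "gamma_3R (path_vertices p) path_adj = sum (path_witness p) (path_vertices p)"
    using path_witness_is_3RDF path_3R_value_le_weight[OF assms]
    by (intro gamma_3R_eqI) (auto simp: sum_path_witness)
  then show ?thesis
    unfolding sum_path_witness path_3R_value_def .
qed

end
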